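(* Let $\mathcal S=\{s_1,\dots,s_k\}\subseteq\Sigma^n$ be a set of pairwise matching strings and let $s^*\in\Sigma^n$ be a string matching every string of $\mathcal S$. Then for every $i\in[1..k]$, $\partial_S(s^*,s_i) = \partial_{Ham}(h_{s_1,s^*}, h_{s_1,s_i})$.
   Context: The swap at position $p$ exchanges the letters at positions $p$ and $p+1$. A swap permutation is a set of swaps at positions pairwise differing by at least $2$. Two strings of length $n$ are matching if some swap permutation transforms one into the other. For matching strings $u,v$, there is a unique valid swap permutation (one never swapping two identical letters) from $u$ to $v$; $h_{u,v}$ is its swap string, the binary string of length $n-1$ with $h_{u,v}[p]=1$ iff it swaps $(p,p+1)$. The swap distance $\partial_S(u,v)$ is $+\infty$ if $u,v$ are not matching, and otherwise the number of swaps in the valid swap permutation from $u$ to $v$ (the number of $1$s in $h_{u,v}$). $\partial_{Ham}$ is the Hamming distance. *)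

theory Defs
  imports Main "HOL-Library.Extended_Nat"
begin

text \<open>Strings are lists; positions are 0-based. A swap at position p exchanges
the letters at positions p and p+1 (so p + 1 < n).\<close>

definition swap_perm :: "nat \<Rightarrow> nat set \<Rightarrow> bool" where
  "swap_perm n P \<longleftrightarrow> (\<forall>p\<in>P. Suc p < n) \<and>
     (\<forall>p\<in>P. \<forall>q\<in>P. p \<noteq> q \<longrightarrow> p + 2 \<le> q \<or> q + 2 \<le> p)"

definition apply_swaps :: "nat set \<Rightarrow> 'a list \<Rightarrow> 'a list" where
  "apply_swaps P u = map (\<lambda>i. if i \<in> P then u ! Suc i
        else if 0 < i \<and> i - 1 \<in> P then u ! (i - 1) else u ! i) [0..<length u]"

definition matching :: "'a list \<Rightarrow> 'a list \<Rightarrow> bool" where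
  "matching u v \<longleftrightarrow> length u = length v \<and>
     (\<exists>P. swap_perm (length u) P \<and> apply_swaps P u = v)"

definition valid_swap_perm :: "'a list \<Rightarrow> 'a list \<Rightarrow> nat set \<Rightarrow> bool" where
  "valid_swap_perm u v P \<longleftrightarrow> length u = length v \<and> swap_perm (length u) P \<and>
     apply_swaps P u = v \<and> (\<forall>p\<in>P. u ! p \<noteq> u ! Suc p)"

definition the_valid_swap_perm :: "'a list \<Rightarrow> 'a list \<Rightarrow> nat set" where
  "the_valid_swap_perm u v = (THE P. valid_swap_perm u v P)"

definition swap_string :: "'a list \<Rightarrow> 'a list \<Rightarrow> bool list" where
  "swap_string u v = map (\<lambda>p. p \<in> the_valid_swap_perm u v) [0..<length u - 1]"

definition hamming :: "'b list \<Rightarrow> 'b list \<Rightarrow> nat" where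
  "hamming xs ys = card {i. i < length xs \<and> xs ! i \<noteq> ys ! i}"

definition swap_dist :: "'a list \<Rightarrow> 'a list \<Rightarrow> enat" where
  "swap_dist u v = (if matching u v then enat (card (the_valid_swap_perm u v)) else \<infinity>)"

end

(*
  Reading two matching strings from the left, the valid swap permutation between them is forced:
  where the first letters agree no swap starts, and where they differ the first two letters must be
  exchanged. This gives an inductive description of valid swap permutations, from which they are
  unique and symmetric. Induction on it shows that if u is carried to x by the valid swaps A and to
  w by the valid swaps B, then x is carried to w by exactly the symmetric difference of A and B:
  a swap made on both sides cancels, one made on one side only survives. For u = s_1, x = s* and
  w = s_i, the size of that symmetric difference is the Hamming distance of h_{s_1,s*} and h_{s_1,s_i}.
*)
theory Submission
  imports Defs
begin

inductive valid_swaps :: "'a list \<Rightarrow> 'a list \<Rightarrow> nat set \<Rightarrow> bool" where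
  Nil: "valid_swaps [] [] {}"
| keep: "valid_swaps us vs P \<Longrightarrow> valid_swaps (a # us) (a # vs) (Suc ` P)"
| swap: "a \<noteq> b \<Longrightarrow> valid_swaps us vs P \<Longrightarrow>
    valid_swaps (a # b # us) (b # a # vs) (insert 0 (Suc ` Suc ` P))"

inductive_cases valid_swaps_NilE: "valid_swaps [] vs P"
inductive_cases valid_swaps_same_headE: "valid_swaps (a # us) (a # vs) P"
inductive_cases valid_swaps_Cons_ConsE: "valid_swaps (a # us) (b # vs) P"
inductive_cases valid_swaps_ConsE: "valid_swaps (a # us) w P"

lemma valid_swaps_sym: "valid_swaps u v P \<Longrightarrow> valid_swaps v u P"
  by (induction rule: valid_swaps.induct) (auto intro: valid_swaps.intros)

lemma valid_swaps_unique: "valid_swaps u v P \<Longrightarrow> valid_swaps u v Q \<Longrightarrow> P = Q"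
proof (induction arbitrary: Q rule: valid_swaps.induct)
  case Nil
  then show ?case by (rule valid_swaps_NilE) simp
next
  case (keep us vs P a)
  from keep.prems show ?case by (rule valid_swaps_same_headE) (simp add: keep.IH)
next
  case (swap a b us vs P)
  from swap.prems show ?case by (rule valid_swaps_Cons_ConsE) (use swap.hyps(1) swap.IH in auto)
qed

lemma valid_swaps_subset: "valid_swaps u v P \<Longrightarrow> P \<subseteq> {..<length u - 1}"
  by (induction rule: valid_swaps.induct) auto

lemma length_apply_swaps [simp]: "length (apply_swaps P u) = length u"
  by (simp add: apply_swaps_def)

lemma nth_apply_swaps: "i < length u \<Longrightarrow> apply_swaps P u ! i =
   (if i \<in> P then u ! Suc i else if 0 < i \<and> i - 1 \<in> P then u ! (i - 1) else u ! i)"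
  by (cases i) (auto simp: apply_swaps_def simp del: upt_Suc)

lemma apply_swaps_Cons_keep:
  assumes "0 \<notin> P"
  shows "apply_swaps P (a # us) = a # apply_swaps {p. Suc p \<in> P} us"
proof (rule nth_equalityI)
  fix i assume i: "i < length (apply_swaps P (a # us))"
  show "apply_swaps P (a # us) ! i = (a # apply_swaps {p. Suc p \<in> P} us) ! i"
  proof (cases i)
    case (Suc j)
    with assms i show ?thesis by (cases j) (simp_all add: nth_apply_swaps)
  qed (simp add: assms nth_apply_swaps)
qed simp

lemma apply_swaps_Cons_swap:
  assumes "0 \<in> P" "Suc 0 \<notin> P"
  shows "apply_swaps P (a # b # us) = b # a # apply_swaps {p. Suc (Suc p) \<in> P} us"
proof (rule nth_equalityI)
  fix i assume i: "i < length (apply_swaps P (a # b # us))"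
  show "apply_swaps P (a # b # us) ! i = (b # a # apply_swaps {p. Suc (Suc p) \<in> P} us) ! i"
  proof (cases i)
    case (Suc j)
    show ?thesis
    proof (cases j)
      case (Suc k)
      with \<open>i = Suc j\<close> assms i show ?thesis by (cases k) (simp_all add: nth_apply_swaps)
    qed (simp add: \<open>i = Suc j\<close> assms nth_apply_swaps)
  qed (simp add: assms nth_apply_swaps)
qed simp

lemma apply_swaps_restrict_distinct:
  assumes "swap_perm (length u) P"
  shows "apply_swaps {p \<in> P. u ! p \<noteq> u ! Suc p} u = apply_swaps P u"
proof (rule nth_equalityI)
  fix i assume "i < length (apply_swaps {p \<in> P. u ! p \<noteq> u ! Suc p} u)"
  moreover have "i \<notin> P" if "0 < i" "i - 1 \<in> P" for i
    using assms that by (fastforce simp: swap_perm_def)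
  ultimately show "apply_swaps {p \<in> P. u ! p \<noteq> u ! Suc p} u ! i = apply_swaps P u ! i"
    by (auto simp: nth_apply_swaps)
qed simp

lemma valid_swaps_imp_valid_swap_perm: "valid_swaps u v P \<Longrightarrow> valid_swap_perm u v P"
proof (induction rule: valid_swaps.induct)
  case Nil
  show ?case by (simp add: valid_swap_perm_def swap_perm_def apply_swaps_def)
next
  case (keep us vs P a)
  have "{p. Suc p \<in> Suc ` P} = P" by auto
  then have "apply_swaps (Suc ` P) (a # us) = a # apply_swaps P us"
    using apply_swaps_Cons_keep[of "Suc ` P" a us] by auto
  with keep show ?case by (auto simp: valid_swap_perm_def swap_perm_def)
next
  case (swap a b us vs P)
  have "{p. Suc (Suc p) \<in> insert 0 (Suc ` Suc ` P)} = P" by auto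
  then have "apply_swaps (insert 0 (Suc ` Suc ` P)) (a # b # us) = b # a # apply_swaps P us"
    using apply_swaps_Cons_swap[of "insert 0 (Suc ` Suc ` P)" a b us] by auto
  with swap show ?case by (auto simp: valid_swap_perm_def swap_perm_def)
qed

lemma nat_set_eq_Suc_image: "0 \<notin> P \<Longrightarrow> P = Suc ` {p. Suc p \<in> P}"
  by (auto simp: image_iff) (metis not0_implies_Suc)

lemma nat_set_eq_insert_0_Suc_Suc_image:
  "0 \<in> P \<Longrightarrow> Suc 0 \<notin> P \<Longrightarrow> P = insert 0 (Suc ` Suc ` {p. Suc (Suc p) \<in> P})"
  by (auto simp: image_iff) (metis not0_implies_Suc)

lemma valid_swaps_apply_swaps:
  assumes "swap_perm (length u) P" and "\<forall>p\<in>P. u ! p \<noteq> u ! Suc p"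
  shows "valid_swaps u (apply_swaps P u) P"
  using assms
proof (induction u arbitrary: P rule: induct_list012)
  case 1
  then have "P = {}" by (simp add: swap_perm_def)
  then show ?case by (simp add: apply_swaps_def valid_swaps.Nil)
next
  case (2 a)
  then have "P = {}" by (simp add: swap_perm_def)
  then show ?case using valid_swaps.keep[OF valid_swaps.Nil, of a] by (simp add: apply_swaps_def)
next
  case (3 a b us)
  show ?case
  proof (cases "0 \<in> P")
    case False
    define P' where "P' = {p. Suc p \<in> P}"
    have P: "P = Suc ` P'"
      using False unfolding P'_def by (rule nat_set_eq_Suc_image)
    have "valid_swaps (b # us) (apply_swaps P' (b # us)) P'"
      using "3.prems" by (intro "3.IH"(2)) (auto simp: swap_perm_def P'_def)
    moreover have "apply_swaps P (a # b # us) = a # apply_swaps P' (b # us)"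
      unfolding P'_def by (rule apply_swaps_Cons_keep[OF False])
    ultimately show ?thesis
      unfolding P by (simp add: valid_swaps.keep)
  next
    case True
    have "Suc 0 \<notin> P" using True "3.prems"(1) by (force simp: swap_perm_def)
    define P' where "P' = {p. Suc (Suc p) \<in> P}"
    have P: "P = insert 0 (Suc ` Suc ` P')"
      using True \<open>Suc 0 \<notin> P\<close> unfolding P'_def by (rule nat_set_eq_insert_0_Suc_Suc_image)
    have "valid_swaps us (apply_swaps P' us) P'"
      using "3.prems" by (intro "3.IH"(1)) (auto simp: swap_perm_def P'_def)
    moreover have "a \<noteq> b" using True "3.prems"(2) by auto
    moreover have "apply_swaps P (a # b # us) = b # a # apply_swaps P' us"
      unfolding P'_def by (rule apply_swaps_Cons_swap[OF True \<open>Suc 0 \<notin> P\<close>])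
    ultimately show ?thesis
      unfolding P by (simp add: valid_swaps.swap)
  qed
qed

lemma valid_swap_perm_iff_valid_swaps: "valid_swap_perm u v P \<longleftrightarrow> valid_swaps u v P"
  using valid_swaps_apply_swaps valid_swaps_imp_valid_swap_perm
  unfolding valid_swap_perm_def by blast

lemma matching_iff_valid_swaps: "matching u v \<longleftrightarrow> (\<exists>P. valid_swaps u v P)"
proof
  assume "matching u v"
  then obtain P where P: "swap_perm (length u) P" "apply_swaps P u = v"
    unfolding matching_def by blast
  let ?Q = "{p \<in> P. u ! p \<noteq> u ! Suc p}"
  have "swap_perm (length u) ?Q" using P(1) by (auto simp: swap_perm_def)
  then have "valid_swaps u (apply_swaps ?Q u) ?Q" by (rule valid_swaps_apply_swaps) simp
  then show "\<exists>P. valid_swaps u v P" using apply_swaps_restrict_distinct[OF P(1)] P(2) by auto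
next
  assume "\<exists>P. valid_swaps u v P"
  then show "matching u v"
    using valid_swaps_imp_valid_swap_perm unfolding matching_def valid_swap_perm_def by blast
qed

lemma the_valid_swap_perm_eqI:
  assumes "valid_swaps u v P"
  shows "the_valid_swap_perm u v = P"
  unfolding the_valid_swap_perm_def valid_swap_perm_iff_valid_swaps
  by (rule the_equality[of "valid_swaps u v", OF assms]) (rule valid_swaps_unique[OF _ assms])

lemma valid_swaps_sym_diff:
  "valid_swaps u x A \<Longrightarrow> valid_swaps u w B \<Longrightarrow> valid_swaps x w C \<Longrightarrow> C = sym_diff A B"
proof (induction u arbitrary: x w A B C rule: measure_induct_rule[of length])
  case (less u)
  show ?case
  proof (cases u)
    case Nil
    with less.prems show ?thesis by (auto elim: valid_swaps_NilE)
  next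
    case (Cons a us)
    have head_kept: "C = sym_diff (Suc ` A) B"
      if uxA: "valid_swaps us xs A" and uwB: "valid_swaps (a # us) w B"
        and xwC: "valid_swaps (a # xs) w C" for xs w A B C
    proof -
      from uwB consider
          (keep) ws B' where "w = a # ws" "B = Suc ` B'" "valid_swaps us ws B'"
        | (swap) b us' ws' B' where "us = b # us'" "w = b # a # ws'"
            "B = insert 0 (Suc ` Suc ` B')" "a \<noteq> b" "valid_swaps us' ws' B'"
        by (rule valid_swaps_ConsE)
      then show ?thesis
      proof cases
        case keep
        from xwC obtain C' where "C = Suc ` C'" "valid_swaps xs ws C'"
          unfolding keep by (rule valid_swaps_same_headE)
        moreover have "C' = sym_diff A B'"
          using less.IH[OF _ uxA keep(3) \<open>valid_swaps xs ws C'\<close>] Cons by simp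
        ultimately show ?thesis using keep by auto
      next
        case swap
        from xwC obtain xs' C' where "xs = b # xs'" "C = insert 0 (Suc ` Suc ` C')" "valid_swaps xs' ws' C'"
          unfolding swap by (rule valid_swaps_Cons_ConsE) (use swap in auto)
        moreover obtain A' where "A = Suc ` A'" "valid_swaps us' xs' A'"
          using uxA swap(1) \<open>xs = b # xs'\<close> by (auto elim: valid_swaps_same_headE)
        moreover have "C' = sym_diff A' B'"
          using less.IH[OF _ \<open>valid_swaps us' xs' A'\<close> swap(5) \<open>valid_swaps xs' ws' C'\<close>] Cons swap(1)
          by simp
        ultimately show ?thesis using swap by auto
      qed
    qed
    from less.prems(1) consider
        (keep) xs A' where "x = a # xs" "A = Suc ` A'" "valid_swaps us xs A'"
      | (swap) b us' xs' A' where "us = b # us'" "x = b # a # xs'"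
          "A = insert 0 (Suc ` Suc ` A')" "a \<noteq> b" "valid_swaps us' xs' A'"
      unfolding Cons by (rule valid_swaps_ConsE)
    then show ?thesis
    proof cases
      case keep
      then show ?thesis using head_kept[OF keep(3)] less.prems(2,3) Cons by simp
    next
      case swap
      from less.prems(2) consider
          (keep_w) ws B' where "w = a # ws" "B = Suc ` B'" "valid_swaps us ws B'"
        | (swap_w) ws' B' where "w = b # a # ws'" "B = insert 0 (Suc ` Suc ` B')" "valid_swaps us' ws' B'"
        unfolding Cons swap(1) by (rule valid_swaps_ConsE) (use swap in auto)
      then show ?thesis
      proof cases
        case keep_w
        have "valid_swaps (a # ws) x C" using valid_swaps_sym[OF less.prems(3)] keep_w(1) by simp
        then have "C = sym_diff B A" using head_kept keep_w less.prems(1) Cons by simp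
        then show ?thesis by blast
      next
        case swap_w
        from less.prems(3) obtain C' where "C = Suc ` Suc ` C'" "valid_swaps xs' ws' C'"
          unfolding swap swap_w by (auto elim!: valid_swaps_same_headE)
        moreover have "C' = sym_diff A' B'"
          using less.IH[OF _ swap(5) swap_w(3) \<open>valid_swaps xs' ws' C'\<close>] Cons swap(1) by simp
        ultimately show ?thesis using swap swap_w by auto
      qed
    qed
  qed
qed

lemma swap_dist_eq_card: "valid_swaps u v P \<Longrightarrow> swap_dist u v = enat (card P)"
  by (auto simp: swap_dist_def matching_iff_valid_swaps the_valid_swap_perm_eqI)

lemma swap_string_eq_map_mem:
  "valid_swaps u v P \<Longrightarrow> swap_string u v = map (\<lambda>p. p \<in> P) [0..<length u - 1]"
  by (simp add: swap_string_def the_valid_swap_perm_eqI)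

lemma hamming_map_mem:
  "hamming (map (\<lambda>p. p \<in> A) [0..<m]) (map (\<lambda>p. p \<in> B) [0..<m]) = card (sym_diff A B \<inter> {..<m})"
  unfolding hamming_def by (rule arg_cong[where f = card]) auto

theorem mainTheorem3:
  fixes s :: "nat \<Rightarrow> 'a list" and sstar :: "'a list" and n k :: nat
  assumes len: "\<forall>i\<in>{1..k}. length (s i) = n"
    and lenstar: "length sstar = n"
    and pairwise: "\<forall>i\<in>{1..k}. \<forall>j\<in>{1..k}. matching (s i) (s j)"
    and star: "\<forall>i\<in>{1..k}. matching sstar (s i)"
  shows "\<forall>i\<in>{1..k}. swap_dist sstar (s i) =
           enat (hamming (swap_string (s 1) sstar) (swap_string (s 1) (s i)))"
proof
  fix i assume i: "i \<in> {1..k}"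
  then have one: "1 \<in> {1..k}" by simp
  obtain A where A: "valid_swaps (s 1) sstar A"
    using star one by (meson matching_iff_valid_swaps valid_swaps_sym)
  obtain B where B: "valid_swaps (s 1) (s i) B"
    using pairwise one i by (meson matching_iff_valid_swaps)
  obtain C where C: "valid_swaps sstar (s i) C"
    using star i by (meson matching_iff_valid_swaps)
  have len1: "length (s 1) = n" using len one by blast
  have "C = sym_diff A B" using A B C by (rule valid_swaps_sym_diff)
  moreover have "sym_diff A B \<subseteq> {..<n - 1}"
    using valid_swaps_subset[OF A] valid_swaps_subset[OF B] len1 by auto
  ultimately have C_eq: "C = sym_diff A B \<inter> {..<n - 1}" by blast
  have "swap_dist sstar (s i) = enat (card C)" by (rule swap_dist_eq_card[OF C])
  also have "card C = hamming (map (\<lambda>p. p \<in> A) [0..<n - 1]) (map (\<lambda>p. p \<in> B) [0..<n - 1])"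
    using C_eq by (simp add: hamming_map_mem)
  also have "\<dots> = hamming (swap_string (s 1) sstar) (swap_string (s 1) (s i))"
    using len1 by (simp only: swap_string_eq_map_mem[OF A] swap_string_eq_map_mem[OF B])
  finally show "swap_dist sstar (s i) =
      enat (hamming (swap_string (s 1) sstar) (swap_string (s 1) (s i)))" .
qed

end
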